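(* Let $\mathcal{S}_0$ and $\mathcal{S}_1$ be two MSyDSs with common node set $V$ such that every local function is a threshold function and every master function is \texttt{OR}. Let $\tau$ be the largest threshold value occurring among the local functions of $\mathcal{S}_0$ and $\mathcal{S}_1$. Then $\mathcal{S}_0$ and $\mathcal{S}_1$ are inequivalent if and only if there is an inequivalence witness for $\mathcal{S}_0$ and $\mathcal{S}_1$ in which at most $\tau$ nodes have state 1.
   Context: A multilayer synchronous dynamical system (MSyDS) $\mathcal{S}$ over $\mathbb{B}=\{0,1\}$ with $k\ge 1$ layers consists of: a finite node set $V$; undirected simple graphs $G_i=(V,E_i)$, $1\le i\le k$ (all layers share the node set $V$); for each layer $i$ and node $v$ a local function $f_{i,v}$ with output in $\mathbb{B}$ whose inputs are the states of the nodes in the closed neighborhood of $v$ in $G_i$ ($v$ and its neighbors in $G_i$); and for each node $v$ a master function $\psi_v:\mathbb{B}^k\to\mathbb{B}$. A configuration is a map $\mathcal{C}:V\to\mathbb{B}$; its successor is $\mathcal{C}'$ with $\mathcal{C}'(v)=\psi_v(f_{1,v}(\mathcal{C}),\dots,f_{k,v}(\mathcal{C}))$ for all $v$ (synchronous update), where $f_{i,v}(\mathcal{C})$ is $f_{i,v}$ evaluated on the states in $\mathcal{C}$ of the closed neighborhood of $v$ in $G_i$. For an integer $t\ge 0$, the $t$-threshold function equals 1 iff at least $t$ of its inputs equal 1; a threshold local function is specified by its threshold $t$. \texttt{OR} is 1 iff at least one input is 1. Two MSyDSs on the same node set are equivalent if every configuration has the same successor under both (i.e., their phase spaces are identical), and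 inequivalent otherwise. An inequivalence witness for two MSyDSs on node set $V$ is a configuration of $V$ whose successors under the two systems differ. *)

theory Defs
  imports Main
begin

definition simple_graph :: "'a set \<Rightarrow> ('a \<Rightarrow> 'a \<Rightarrow> bool) \<Rightarrow> bool" where
  "simple_graph V E \<longleftrightarrow>
     (\<forall>u v. E u v \<longrightarrow> u \<in> V \<and> v \<in> V \<and> u \<noteq> v \<and> E v u)"

definition closed_nbhd :: "('a \<Rightarrow> 'a \<Rightarrow> bool) \<Rightarrow> 'a \<Rightarrow> 'a set" where
  "closed_nbhd E v = insert v {u. E v u}"

text \<open>Configurations of V: maps V to {0,1} (False = 0, True = 1), fixed to 0 outside V.\<close>
definition configs :: "'a set \<Rightarrow> ('a \<Rightarrow> bool) set" where
  "configs V = {C. \<forall>u. u \<notin> V \<longrightarrow> \<not> C u}"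

definition threshold_fn :: "nat \<Rightarrow> 'a set \<Rightarrow> ('a \<Rightarrow> bool) \<Rightarrow> bool" where
  "threshold_fn t S C \<longleftrightarrow> t \<le> card {u \<in> S. C u}"

definition OR_fn :: "bool list \<Rightarrow> bool" where
  "OR_fn bs \<longleftrightarrow> (\<exists>b \<in> set bs. b)"

text \<open>An MSyDS with k layers G_i = (V, E i), i < k, all of whose local functions are
  threshold functions (threshold t i v for layer i, node v) and all master functions OR.\<close>
definition thr_or_msyds :: "'a set \<Rightarrow> nat \<Rightarrow> (nat \<Rightarrow> 'a \<Rightarrow> 'a \<Rightarrow> bool) \<Rightarrow> bool" where
  "thr_or_msyds V k E \<longleftrightarrow> finite V \<and> k \<ge> 1 \<and> (\<forall>i<k. simple_graph V (E i))"

definition thr_or_succ ::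
  "nat \<Rightarrow> (nat \<Rightarrow> 'a \<Rightarrow> 'a \<Rightarrow> bool) \<Rightarrow> (nat \<Rightarrow> 'a \<Rightarrow> nat) \<Rightarrow> ('a \<Rightarrow> bool) \<Rightarrow> 'a \<Rightarrow> bool" where
  "thr_or_succ k E t C v =
     OR_fn (map (\<lambda>i. threshold_fn (t i v) (closed_nbhd (E i) v) C) [0..<k])"

definition ineq_witness ::
  "'a set \<Rightarrow> nat \<Rightarrow> (nat \<Rightarrow> 'a \<Rightarrow> 'a \<Rightarrow> bool) \<Rightarrow> (nat \<Rightarrow> 'a \<Rightarrow> nat)
   \<Rightarrow> nat \<Rightarrow> (nat \<Rightarrow> 'a \<Rightarrow> 'a \<Rightarrow> bool) \<Rightarrow> (nat \<Rightarrow> 'a \<Rightarrow> nat) \<Rightarrow> ('a \<Rightarrow> bool) \<Rightarrow> bool" where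
  "ineq_witness V k0 E0 t0 k1 E1 t1 C \<longleftrightarrow>
     C \<in> configs V \<and> (\<exists>v \<in> V. thr_or_succ k0 E0 t0 C v \<noteq> thr_or_succ k1 E1 t1 C v)"

definition equivalent ::
  "'a set \<Rightarrow> nat \<Rightarrow> (nat \<Rightarrow> 'a \<Rightarrow> 'a \<Rightarrow> bool) \<Rightarrow> (nat \<Rightarrow> 'a \<Rightarrow> nat)
   \<Rightarrow> nat \<Rightarrow> (nat \<Rightarrow> 'a \<Rightarrow> 'a \<Rightarrow> bool) \<Rightarrow> (nat \<Rightarrow> 'a \<Rightarrow> nat) \<Rightarrow> bool" where
  "equivalent V k0 E0 t0 k1 E1 t1 \<longleftrightarrow>
     (\<forall>C \<in> configs V. \<forall>v \<in> V. thr_or_succ k0 E0 t0 C v = thr_or_succ k1 E1 t1 C v)"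

end

theory Submission
  imports Defs
begin

text \<open>A node's successor state under threshold/OR rules is monotone in the configuration.
  If the two systems disagree at a node v, say the first system sets v to 1 and the second
  to 0, then some layer i of the first system sees at least t i v active nodes around v.
  Keeping exactly t i v of them active still makes the first system output 1 at v, and by
  monotonicity the second system still outputs 0; the new witness has at most t i v ones.\<close>

lemma thr_or_succ_iff:
  "thr_or_succ k E t C v \<longleftrightarrow> (\<exists>i<k. t i v \<le> card {u \<in> closed_nbhd (E i) v. C u})"
  by (auto simp: thr_or_succ_def OR_fn_def threshold_fn_def)

lemma finite_active_subset:
  assumes "finite V" "C \<in> configs V"
  shows "finite {u \<in> S. C u}"
  using assms by (auto simp: configs_def intro: finite_subset[of _ V])

lemma thr_or_succ_mono:
  assumes "finite V" "C \<in> configs V" "\<And>u. C' u \<Longrightarrow> C u" "thr_or_succ k E t C' v"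
  shows "thr_or_succ k E t C v"
proof -
  from assms(4) obtain i where "i < k" and "t i v \<le> card {u \<in> closed_nbhd (E i) v. C' u}"
    by (auto simp: thr_or_succ_iff)
  moreover have "card {u \<in> closed_nbhd (E i) v. C' u} \<le> card {u \<in> closed_nbhd (E i) v. C u}"
    using assms(3) by (intro card_mono[OF finite_active_subset[OF assms(1,2)]]) auto
  ultimately show ?thesis
    by (auto simp: thr_or_succ_iff)
qed

lemma thr_or_succ_small_support:
  assumes "finite V" "C \<in> configs V" "thr_or_succ k E t C v"
  obtains C' i where "C' \<in> configs V" "\<And>u. C' u \<Longrightarrow> C u" "thr_or_succ k E t C' v"
    "i < k" "card {u \<in> V. C' u} \<le> t i v"
proof -
  from assms(3) obtain i where i: "i < k" "t i v \<le> card {u \<in> closed_nbhd (E i) v. C u}"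
    by (auto simp: thr_or_succ_iff)
  obtain S where S: "S \<subseteq> {u \<in> closed_nbhd (E i) v. C u}" "card S = t i v"
    using obtain_subset_with_card_n[OF i(2)] by metis
  have below: "\<And>u. u \<in> S \<Longrightarrow> C u"
    using S(1) by auto
  have "S \<subseteq> V"
    using below assms(2) by (auto simp: configs_def)
  then have config: "(\<lambda>u. u \<in> S) \<in> configs V" and "{u \<in> V. u \<in> S} = S"
    by (auto simp: configs_def)
  then have "card {u \<in> V. u \<in> S} = t i v"
    using S(2) by simp
  moreover have "{u \<in> closed_nbhd (E i) v. u \<in> S} = S"
    using S(1) by auto
  then have "thr_or_succ k E t (\<lambda>u. u \<in> S) v"
    using i(1) S(2) by (auto simp: thr_or_succ_iff)
  ultimately show ?thesis
    using that[of "\<lambda>u. u \<in> S" i] config below i(1) by simp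
qed

lemma disagreement_small_support_one_sided:
  assumes "finite V" "C \<in> configs V"
    and "thr_or_succ k E t C v" "\<not> thr_or_succ k' E' t' C v"
  obtains C' i where "C' \<in> configs V" "thr_or_succ k E t C' v" "\<not> thr_or_succ k' E' t' C' v"
    "i < k" "card {u \<in> V. C' u} \<le> t i v"
  using thr_or_succ_small_support[OF assms(1-3)] thr_or_succ_mono[OF assms(1,2)] assms(4)
  by metis

lemma disagreement_small_support:
  assumes "finite V" "C \<in> configs V"
    and "thr_or_succ k E t C v \<noteq> thr_or_succ k' E' t' C v"
  obtains C' where "C' \<in> configs V" "thr_or_succ k E t C' v \<noteq> thr_or_succ k' E' t' C' v"
    "(\<exists>i<k. card {u \<in> V. C' u} \<le> t i v) \<or> (\<exists>j<k'. card {u \<in> V. C' u} \<le> t' j v)"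
proof (cases "thr_or_succ k E t C v")
  case True
  with assms(3) have "\<not> thr_or_succ k' E' t' C v"
    by simp
  from disagreement_small_support_one_sided[OF assms(1,2) True this] show ?thesis
    using that by blast
next
  case False
  with assms(3) have "thr_or_succ k' E' t' C v"
    by simp
  from disagreement_small_support_one_sided[OF assms(1,2) this False] show ?thesis
    using that by blast
qed

lemma finite_threshold_values:
  fixes t :: "nat \<Rightarrow> 'a \<Rightarrow> 'b"
  assumes "finite V"
  shows "finite {t i v | i v. i < k \<and> v \<in> V}"
proof -
  have "{t i v | i v. i < k \<and> v \<in> V} = (\<lambda>(i, v). t i v) ` ({..<k} \<times> V)"
    by auto
  then show ?thesis
    using assms by simp
qed

theorem lemma5p2:
  fixes V :: "'a set" and k0 k1 :: nat
    and E0 E1 :: "nat \<Rightarrow> 'a \<Rightarrow> 'a \<Rightarrow> bool" and t0 t1 :: "nat \<Rightarrow> 'a \<Rightarrow> nat"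
  assumes "thr_or_msyds V k0 E0" and "thr_or_msyds V k1 E1"
  defines "\<tau> \<equiv> Max ({t0 i v | i v. i < k0 \<and> v \<in> V} \<union> {t1 i v | i v. i < k1 \<and> v \<in> V})"
  shows "\<not> equivalent V k0 E0 t0 k1 E1 t1 \<longleftrightarrow>
         (\<exists>C. ineq_witness V k0 E0 t0 k1 E1 t1 C \<and> card {v \<in> V. C v} \<le> \<tau>)"
proof
  assume "\<not> equivalent V k0 E0 t0 k1 E1 t1"
  then obtain C v where C: "C \<in> configs V" "v \<in> V"
    and differ: "thr_or_succ k0 E0 t0 C v \<noteq> thr_or_succ k1 E1 t1 C v"
    by (auto simp: equivalent_def)
  have "finite V"
    using assms(1) by (simp add: thr_or_msyds_def)
  have fin: "finite ({t0 i v | i v. i < k0 \<and> v \<in> V} \<union> {t1 i v | i v. i < k1 \<and> v \<in> V})"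
    using \<open>finite V\<close> by (simp add: finite_threshold_values)
  obtain C' where C': "C' \<in> configs V" "thr_or_succ k0 E0 t0 C' v \<noteq> thr_or_succ k1 E1 t1 C' v"
    and small: "(\<exists>i<k0. card {u \<in> V. C' u} \<le> t0 i v) \<or> (\<exists>j<k1. card {u \<in> V. C' u} \<le> t1 j v)"
    using disagreement_small_support[OF \<open>finite V\<close> C(1) differ] by blast
  from small C(2) obtain s where card_le: "card {u \<in> V. C' u} \<le> s"
    and threshold: "s \<in> {t0 i v | i v. i < k0 \<and> v \<in> V} \<union> {t1 i v | i v. i < k1 \<and> v \<in> V}"
    by blast
  have "card {u \<in> V. C' u} \<le> \<tau>"
    unfolding \<tau>_def using card_le Max_ge[OF fin threshold] by (rule le_trans)
  then show "\<exists>C. ineq_witness V k0 E0 t0 k1 E1 t1 C \<and> card {v \<in> V. C v} \<le> \<tau>"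
    using C' C(2) by (auto simp: ineq_witness_def)
qed (auto simp: ineq_witness_def equivalent_def)

end
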